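(* Let $d:\Sigma^n\to\Sigma$ be a depth assignment and let $s_0,\dots,s_m$ be a path in the valid subgraph of $B_n$ (i.e. each $(s_i,s_{i+1})$ is a valid arc). Then \[\sum_{i=0}^{m-1} e_{s_i[0]} \equiv P\left(H(s_0)+e_{d_{s_0}}\right) - P\left(H(s_m)+e_{d_{s_m}}\right) \mod K.\]
   Context: Let $k\ge 1$ be an integer, $\Sigma=\{0,1,\dots,k-1\}$ with arithmetic on symbols taken modulo $k$, and $n\ge 1$. For $s\in\Sigma^n$ write $s=s[0]\cdots s[n-1]$. The de Bruijn graph $B_n$ has node set $\Sigma^n$ and an arc $(s,t)$ iff $s[1]\cdots s[n-1]=t[0]\cdots t[n-2]$. A depth assignment is any function $d:\Sigma^n\to\Sigma$, written $s\mapsto d_s$. An arc $(s,t)$ of $B_n$ is valid (with respect to $d$) if, with $b=s[0]$ and $c=t[n-1]$, either ($b+1=c$ and $d_s=d_t$) or ($b+1=d_t$ and $c=d_s$); the valid arcs form the valid subgraph. The histogram $H(s):\Sigma\to\mathbb{Z}$ counts occurrences of each symbol in $s$; $e_b$ is the indicator function of $b\in\Sigma$; $K$ is the constant function $1$ on $\Sigma$; $P(H)(i)=\sum_{j=0}^i H(j)$ is the partial sum of $H:\Sigma\to\mathbb{Z}$; $F\equiv G\mod K$ means $F-G$ is an integer multiple of $K$. *)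

theory Defs
  imports Main
begin

text \<open>Alphabet \<Sigma> = {0..<k} (naturals), strings of length n are lists.
Functions \<Sigma> \<rightarrow> Z are modelled as nat \<Rightarrow> int, only values on {0..<k} matter.\<close>

definition strings :: "nat \<Rightarrow> nat \<Rightarrow> nat list set" where
  "strings k n = {s. length s = n \<and> (\<forall>x\<in>set s. x < k)}"

definition db_arc :: "nat \<Rightarrow> nat \<Rightarrow> nat list \<Rightarrow> nat list \<Rightarrow> bool" where
  "db_arc k n s t \<longleftrightarrow> s \<in> strings k n \<and> t \<in> strings k n \<and>
     drop 1 s = take (n - 1) t"

definition valid_arc :: "nat \<Rightarrow> nat \<Rightarrow> (nat list \<Rightarrow> nat) \<Rightarrow> nat list \<Rightarrow> nat list \<Rightarrow> bool" where
  "valid_arc k n d s t \<longleftrightarrow> db_arc k n s t \<and>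
     (let b = s ! 0; c = t ! (n - 1) in
       ((b + 1) mod k = c \<and> d s = d t) \<or> ((b + 1) mod k = d t \<and> c = d s))"

definition hist :: "nat list \<Rightarrow> nat \<Rightarrow> int" where
  "hist s j = int (count_list s j)"

definition ind :: "nat \<Rightarrow> nat \<Rightarrow> int" where
  "ind b j = (if j = b then 1 else 0)"

definition psum :: "(nat \<Rightarrow> int) \<Rightarrow> nat \<Rightarrow> int" where
  "psum H i = (\<Sum>j\<le>i. H j)"

definition cong_K :: "nat \<Rightarrow> (nat \<Rightarrow> int) \<Rightarrow> (nat \<Rightarrow> int) \<Rightarrow> bool" where
  "cong_K k F G \<longleftrightarrow> (\<exists>c::int. \<forall>i<k. F i - G i = c)"

end

theory Submission
  imports Defs
begin

text \<open>Along a valid arc from s to t with b = s[0] and c = t[n-1], the vector H(s) + e_{d_s} changes by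
  -e_b + e_{b+1}: if b+1 = c the new last symbol is c and the depth is unchanged, otherwise
  the depth b+1 replaces the old depth c as the new last symbol. Taking partial sums,
  P(e_b) - P(e_{b+1}) is e_b exactly when b+1 < k, and e_b - K when b = k-1 and b+1 wraps
  around to 0. So each arc contributes e_b modulo K, and the claim telescopes.\<close>

definition potential :: "(nat list \<Rightarrow> nat) \<Rightarrow> nat list \<Rightarrow> nat \<Rightarrow> int" where
  "potential d s = psum (\<lambda>l. hist s l + ind (d s) l)"

lemma cong_K_add:
  assumes "cong_K k F G" and "cong_K k F' G'"
  shows "cong_K k (\<lambda>j. F j + F' j) (\<lambda>j. G j + G' j)"
proof -
  from assms obtain c c' where "\<forall>i<k. F i - G i = c" and "\<forall>i<k. F' i - G' i = c'"
    unfolding cong_K_def by blast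
  then have "\<forall>i<k. (F i + F' i) - (G i + G' i) = c + c'"
    by (simp add: algebra_simps)
  then show ?thesis
    unfolding cong_K_def by blast
qed

lemma cong_K_telescope:
  assumes "\<forall>i<m. cong_K k (f i) (\<lambda>j. g i j - g (Suc i) j)"
  shows "cong_K k (\<lambda>j. \<Sum>i<m. f i j) (\<lambda>j. g 0 j - g m j)"
  using assms
proof (induction m)
  case 0
  then show ?case
    by (simp add: cong_K_def)
next
  case (Suc m)
  then have "cong_K k (\<lambda>j. (\<Sum>i<m. f i j) + f m j)
      (\<lambda>j. (g 0 j - g m j) + (g m j - g (Suc m) j))"
    by (intro cong_K_add) simp_all
  then show ?case
    by simp
qed

lemma psum_add: "psum (\<lambda>l. f l + g l) j = psum f j + psum g j"
  unfolding psum_def by (simp add: sum.distrib)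

lemma psum_diff: "psum (\<lambda>l. f l - g l) j = psum f j - psum g j"
  unfolding psum_def by (simp add: sum_subtractf)

lemma psum_ind: "psum (ind b) j = (if b \<le> j then 1 else 0)"
  unfolding psum_def ind_def by (simp add: sum.delta)

lemma cong_K_ind_psum_ind_diff:
  assumes "b < k"
  shows "cong_K k (ind b) (\<lambda>j. psum (ind b) j - psum (ind ((b + 1) mod k)) j)"
proof (cases "b + 1 = k")
  case True
  then have "\<forall>j<k. ind b j - (psum (ind b) j - psum (ind ((b + 1) mod k)) j) = 1"
    by (auto simp: psum_ind ind_def)
  then show ?thesis
    unfolding cong_K_def by blast
next
  case False
  with assms have "\<forall>j<k. ind b j - (psum (ind b) j - psum (ind ((b + 1) mod k)) j) = 0"
    by (auto simp: psum_ind ind_def)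
  then show ?thesis
    unfolding cong_K_def by blast
qed

lemma hist_db_arc:
  assumes "db_arc k n s t" and "n \<ge> 1"
  shows "hist t l = hist s l - ind (s ! 0) l + ind (t ! (n - 1)) l"
proof -
  have len: "length s = n" "length t = n"
    using assms(1) by (auto simp: db_arc_def strings_def)
  then obtain s' where s: "s = s ! 0 # s'"
    using assms(2) by (cases s) auto
  have "take (n - 1) t = drop 1 s"
    using assms(1) by (simp add: db_arc_def)
  also have "drop 1 s = s'"
    by (subst s) simp
  finally have "t = s' @ [t ! (n - 1)]"
    using len assms(2) take_Suc_conv_app_nth[of "n - 1" t] by simp
  then have "count_list t l = count_list s' l + count_list [t ! (n - 1)] l"
    by (metis count_list_append)
  moreover have "count_list s l = count_list s' l + count_list [s ! 0] l"
    by (subst s) simp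
  ultimately show ?thesis
    unfolding hist_def ind_def by auto
qed

lemma hist_depth_valid_arc:
  assumes "valid_arc k n d s t" and "n \<ge> 1"
  shows "hist t l + ind (d t) l = hist s l + ind (d s) l - ind (s ! 0) l + ind ((s ! 0 + 1) mod k) l"
  using assms hist_db_arc[of k n s t l] unfolding valid_arc_def Let_def by auto

lemma cong_K_potential_valid_arc:
  assumes "valid_arc k n d s t" and "n \<ge> 1"
  shows "cong_K k (ind (s ! 0)) (\<lambda>j. potential d s j - potential d t j)"
proof -
  let ?b = "s ! 0"
  have "?b < k"
    using assms by (auto simp: valid_arc_def db_arc_def strings_def)
  moreover have "potential d s j - potential d t j = psum (ind ?b) j - psum (ind ((?b + 1) mod k)) j"
    for j
    unfolding potential_def hist_depth_valid_arc[OF assms] by (simp add: psum_add psum_diff)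
  ultimately show ?thesis
    using cong_K_ind_psum_ind_diff[of ?b k] by simp
qed

theorem lemma4:
  fixes k n m :: nat and d :: "nat list \<Rightarrow> nat" and s :: "nat \<Rightarrow> nat list"
  assumes "k \<ge> 1" and "n \<ge> 1"
    and "\<forall>x\<in>strings k n. d x < k"
    and "\<forall>i\<le>m. s i \<in> strings k n"
    and "\<forall>i<m. valid_arc k n d (s i) (s (Suc i))"
  shows "cong_K k (\<lambda>j. \<Sum>i<m. ind (s i ! 0) j)
           (\<lambda>j. psum (\<lambda>l. hist (s 0) l + ind (d (s 0)) l) j
              - psum (\<lambda>l. hist (s m) l + ind (d (s m)) l) j)"
proof -
  have "\<forall>i<m. cong_K k (ind (s i ! 0)) (\<lambda>j. potential d (s i) j - potential d (s (Suc i)) j)"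
    using assms(2,5) cong_K_potential_valid_arc by blast
  then have "cong_K k (\<lambda>j. \<Sum>i<m. ind (s i ! 0) j) (\<lambda>j. potential d (s 0) j - potential d (s m) j)"
    by (rule cong_K_telescope)
  then show ?thesis
    unfolding potential_def .
qed

end
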